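(* Let $v=[q;w_1,\ldots,w_n]$ be a WVG and $i\neq j$ players with $w_j\ge w_i$. Then $\beta_{\&\{i,j\}}(v_{\&\{i,j\}})\ge\beta_i(v)$; i.e. annexing a player of at least equal weight can never decrease the annexer's Banzhaf index.
   Context: A weighted voting game (WVG) $v=[q;w_1,\ldots,w_n]$ has player set $N=\{1,\ldots,n\}$, nonnegative weights $w_j$ and quota $q$ with $0<q\le \sum_j w_j$; a coalition $S\subseteq N$ is winning iff $\sum_{j\in S}w_j\ge q$. Player $j$ is critical in $S$ if $S$ is winning and $S\setminus\{j\}$ is losing; $\eta_j(v)$ is the number of coalitions in which $j$ is critical; $\beta_j(v)=\eta_j(v)/\sum_k\eta_k(v)$. The merged game $v_{\&T}$ has the same quota, players outside $T$ keep their weights, and the players of $T$ are replaced by one player $\&T$ of weight $\sum_{j\in T}w_j$. *)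

theory Defs
  imports Complex_Main
begin

definition winning :: "('p \<Rightarrow> real) \<Rightarrow> real \<Rightarrow> 'p set \<Rightarrow> bool" where
  "winning w q S \<longleftrightarrow> (\<Sum>k\<in>S. w k) \<ge> q"

definition critical :: "('p \<Rightarrow> real) \<Rightarrow> real \<Rightarrow> 'p \<Rightarrow> 'p set \<Rightarrow> bool" where
  "critical w q j S \<longleftrightarrow> winning w q S \<and> \<not> winning w q (S - {j})"

definition eta :: "'p set \<Rightarrow> ('p \<Rightarrow> real) \<Rightarrow> real \<Rightarrow> 'p \<Rightarrow> nat" where
  "eta P w q j = card {S. S \<subseteq> P \<and> critical w q j S}"

definition banzhaf :: "'p set \<Rightarrow> ('p \<Rightarrow> real) \<Rightarrow> real \<Rightarrow> 'p \<Rightarrow> real" where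
  "banzhaf P w q j = real (eta P w q j) / (\<Sum>k\<in>P. real (eta P w q k))"

text \<open>Merged game: the players of T are replaced by the single player T (the set itself);
  every other player k becomes the singleton {k}.\<close>
definition merged_players :: "'p set \<Rightarrow> 'p set \<Rightarrow> 'p set set" where
  "merged_players P T = (\<lambda>k. {k}) ` (P - T) \<union> {T}"

definition merged_weight :: "('p \<Rightarrow> real) \<Rightarrow> 'p set \<Rightarrow> real" where
  "merged_weight w X = (\<Sum>k\<in>X. w k)"

end

theory Submission
  imports Defs
begin

(* Write eta' for swing counts in the merged game
   v&T, T = {i,j}.  A coalition of v&T is a set of blocks (the block T and singletons),
   and it is determined by the union of its blocks, which is a coalition of v of the
   same weight.  Taking unions therefore embeds the coalitions in which a block X is
   critical into the coalitions of v that lose when X leaves.  From this we get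
     (1) eta'({k}) <= eta(k) for k outside T, and eta'(T) <= eta(i) + eta(j),
         so the total swing count can only decrease under merging;
     (2) eta(i) <= eta'(T) when w j >= w i: adding j to a coalition in which i is
         critical gives one in which T is critical, and this map is injective because
         j would otherwise replace i in a losing coalition.
   Then beta_i(v) = eta(i)/total <= eta'(T)/total' = beta_T(v&T), an elementary
   inequality between fractions. *)

lemma merged_players_disjoint:
  "X \<in> merged_players P T \<Longrightarrow> Y \<in> merged_players P T \<Longrightarrow> X \<noteq> Y \<Longrightarrow> X \<inter> Y = {}"
  by (auto simp: merged_players_def)

lemma merged_players_nonempty: "T \<noteq> {} \<Longrightarrow> X \<in> merged_players P T \<Longrightarrow> X \<noteq> {}"
  by (auto simp: merged_players_def)

lemma merged_players_finite_block: "finite T \<Longrightarrow> X \<in> merged_players P T \<Longrightarrow> finite X"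
  by (auto simp: merged_players_def)

lemma finite_merged_players: "finite P \<Longrightarrow> finite (merged_players P T)"
  by (auto simp: merged_players_def)

lemma merged_players_subset: "T \<subseteq> P \<Longrightarrow> X \<in> merged_players P T \<Longrightarrow> X \<subseteq> P"
  by (auto simp: merged_players_def)

lemma merged_players_insert:
  "merged_players P T = insert T ((\<lambda>k. {k}) ` (P - T))"
  by (auto simp: merged_players_def)

lemma sum_merged_weight:
  assumes "finite T" "S \<subseteq> merged_players P T"
  shows "sum (merged_weight w) S = sum w (\<Union>S)"
proof -
  have "\<forall>A\<in>S. finite A" using assms merged_players_finite_block by auto
  moreover have "\<forall>A\<in>S. \<forall>B\<in>S. A \<noteq> B \<longrightarrow> A \<inter> B = {}"
    using assms(2) merged_players_disjoint by (metis subsetD)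
  ultimately have "sum w (\<Union>S) = (sum \<circ> sum) w S" by (rule sum.Union_disjoint)
  thus ?thesis by (simp add: merged_weight_def o_def)
qed

lemma Union_Diff_block:
  assumes "S \<subseteq> merged_players P T" "X \<in> merged_players P T"
  shows "\<Union>(S - {X}) = \<Union>S - X"
proof
  show "\<Union>(S - {X}) \<subseteq> \<Union>S - X"
  proof
    fix x assume "x \<in> \<Union>(S - {X})"
    then obtain Y where Y: "Y \<in> S" "Y \<noteq> X" "x \<in> Y" by blast
    then have "Y \<inter> X = {}" using merged_players_disjoint[of Y P T X] assms by blast
    then show "x \<in> \<Union>S - X" using Y by blast
  qed
qed blast

lemma inj_on_Union_merged:
  assumes "T \<noteq> {}"
  shows "inj_on Union (Pow (merged_players P T))"
proof (rule inj_onI)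
  have sub: "A \<subseteq> B" if A: "A \<subseteq> merged_players P T" and B: "B \<subseteq> merged_players P T"
    and eq: "\<Union>A = \<Union>B" for A B
  proof
    fix X assume X: "X \<in> A"
    then obtain x where x: "x \<in> X" using merged_players_nonempty[OF assms] A by blast
    then obtain Y where Y: "Y \<in> B" "x \<in> Y" using eq X by blast
    have "X = Y" using merged_players_disjoint[of X P T Y] X Y x A B by blast
    thus "X \<in> B" using Y by simp
  qed
  fix A B assume "A \<in> Pow (merged_players P T)" "B \<in> Pow (merged_players P T)" "\<Union>A = \<Union>B"
  then show "A = B" using sub[of A B] sub[of B A] by auto
qed

lemma Union_blocks:
  assumes "U \<subseteq> P" "T \<subseteq> U"
  shows "\<Union>{X \<in> merged_players P T. X \<subseteq> U} = U"
proof
  show "U \<subseteq> \<Union>{X \<in> merged_players P T. X \<subseteq> U}"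
  proof
    fix x assume x: "x \<in> U"
    have "T \<in> merged_players P T" by (simp add: merged_players_def)
    moreover have "x \<notin> T \<Longrightarrow> {x} \<in> merged_players P T"
      using x assms(1) by (auto simp: merged_players_def)
    ultimately show "x \<in> \<Union>{X \<in> merged_players P T. X \<subseteq> U}"
      using x assms(2) by (cases "x \<in> T") blast+
  qed
qed blast

lemma critical_mem: "critical w q k S \<Longrightarrow> k \<in> S"
  unfolding critical_def by (cases "k \<in> S") auto

lemma critical_merged_iff:
  assumes "finite T" "S \<subseteq> merged_players P T" "X \<in> merged_players P T"
  shows "critical (merged_weight w) q X S \<longleftrightarrow> winning w q (\<Union>S) \<and> \<not> winning w q (\<Union>S - X)"
proof -
  have "S - {X} \<subseteq> merged_players P T" using assms by blast
  then show ?thesis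
    unfolding critical_def winning_def
    using sum_merged_weight[OF assms(1,2)] sum_merged_weight[OF assms(1), of "S - {X}"]
      Union_Diff_block[OF assms(2,3)]
    by simp
qed

lemma eta_merged_card_Union:
  assumes "T \<noteq> {}"
  shows "eta (merged_players P T) (merged_weight w) q X
       = card (Union ` {S. S \<subseteq> merged_players P T \<and> critical (merged_weight w) q X S})"
  unfolding eta_def
  by (rule card_image[symmetric], rule inj_on_subset[OF inj_on_Union_merged[OF assms]]) auto

lemma eta_merged_singleton_le:
  assumes "finite P" "T \<subseteq> P" "T \<noteq> {}" "k \<in> P - T"
  shows "eta (merged_players P T) (merged_weight w) q {k} \<le> eta P w q k"
proof -
  let ?M = "merged_players P T"
  have finT: "finite T" using assms(1,2) finite_subset by blast
  have kM: "{k} \<in> ?M" using assms(4) by (auto simp: merged_players_def)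
  have "Union ` {S. S \<subseteq> ?M \<and> critical (merged_weight w) q {k} S}
        \<subseteq> {U. U \<subseteq> P \<and> critical w q k U}"
  proof (rule image_subsetI, clarify)
    fix S assume S: "S \<subseteq> ?M" "critical (merged_weight w) q {k} S"
    have "\<Union>S \<subseteq> P" using S(1) merged_players_subset[OF assms(2)] by blast
    moreover have "critical w q k (\<Union>S)"
      using S critical_merged_iff[OF finT S(1) kM] unfolding critical_def by simp
    ultimately show "\<Union>S \<subseteq> P \<and> critical w q k (\<Union>S)" ..
  qed
  then show ?thesis
    unfolding eta_merged_card_Union[OF assms(3)]
    by (subst eta_def, intro card_mono) (use assms(1) in auto)
qed

text \<open>If T = {i,j} is critical in a merged coalition with union U, then either i is
  critical in U, or j is critical in U without i.\<close>

lemma eta_merged_pair_le: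
  assumes "finite P" "i \<in> P" "j \<in> P"
  shows "eta (merged_players P {i,j}) (merged_weight w) q {i,j} \<le> eta P w q i + eta P w q j"
proof -
  let ?M = "merged_players P {i,j}"
  let ?Ci = "{S. S \<subseteq> P \<and> critical w q i S}"
  let ?Cj = "{S. S \<subseteq> P \<and> critical w q j S}"
  have TM: "{i,j} \<in> ?M" by (auto simp: merged_players_def)
  have fin: "finite ?Ci" "finite ?Cj" using assms(1) by auto
  have unions: "Union ` {S. S \<subseteq> ?M \<and> critical (merged_weight w) q {i,j} S}
                \<subseteq> ?Ci \<union> insert i ` ?Cj"
  proof (rule image_subsetI)
    fix S assume "S \<in> {S. S \<subseteq> ?M \<and> critical (merged_weight w) q {i,j} S}"
    then have S: "S \<subseteq> ?M" "critical (merged_weight w) q {i,j} S" by simp_all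
    define U where "U = \<Union>S"
    have UP: "U \<subseteq> P" using S(1) merged_players_subset[of "{i,j}" P] assms unfolding U_def by blast
    have iU: "i \<in> U" using critical_mem[OF S(2)] unfolding U_def by blast
    have win: "winning w q U" and lose: "\<not> winning w q (U - {i,j})"
      using critical_merged_iff[OF _ S(1) TM] S(2) unfolding U_def by auto
    have "U \<in> ?Ci \<union> insert i ` ?Cj"
    proof (cases "winning w q (U - {i})")
      case False
      then show ?thesis using win UP unfolding critical_def by simp
    next
      case True
      have "U - {i} - {j} = U - {i,j}" by blast
      then have "U - {i} \<in> ?Cj" using True lose UP unfolding critical_def by auto
      moreover have "U = insert i (U - {i})" using iU by blast
      ultimately show ?thesis by blast
    qed
    then show "\<Union>S \<in> ?Ci \<union> insert i ` ?Cj" unfolding U_def .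
  qed
  have "eta ?M (merged_weight w) q {i,j}
        = card (Union ` {S. S \<subseteq> ?M \<and> critical (merged_weight w) q {i,j} S})"
    by (rule eta_merged_card_Union) simp
  also have "\<dots> \<le> card (?Ci \<union> insert i ` ?Cj)"
    using unions fin by (intro card_mono) auto
  also have "\<dots> \<le> card ?Ci + card (insert i ` ?Cj)" by (rule card_Un_le)
  also have "\<dots> \<le> card ?Ci + card ?Cj" using card_image_le[OF fin(2)] by simp
  finally show ?thesis unfolding eta_def .
qed

lemma sum_eta_merged_le:
  assumes "finite P" "i \<in> P" "j \<in> P" "i \<noteq> j"
  shows "(\<Sum>X\<in>merged_players P {i,j}. real (eta (merged_players P {i,j}) (merged_weight w) q X))
       \<le> (\<Sum>k\<in>P. real (eta P w q k))"
proof -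
  let ?e' = "\<lambda>X. real (eta (merged_players P {i,j}) (merged_weight w) q X)"
  let ?e = "\<lambda>k. real (eta P w q k)"
  let ?R = "P - {i,j}"
  have finR: "finite ?R" using assms(1) by simp
  have "(\<Sum>X\<in>merged_players P {i,j}. ?e' X) = ?e' {i,j} + (\<Sum>k\<in>?R. ?e' {k})"
    unfolding merged_players_insert using finR assms(4)
    by (subst sum.insert) (auto simp: sum.reindex inj_on_def)
  also have "\<dots> \<le> (?e i + ?e j) + (\<Sum>k\<in>?R. ?e k)"
  proof (rule add_mono)
    show "?e' {i,j} \<le> ?e i + ?e j"
      using eta_merged_pair_le[OF assms(1-3), of w q] by (metis of_nat_add of_nat_le_iff)
    show "(\<Sum>k\<in>?R. ?e' {k}) \<le> (\<Sum>k\<in>?R. ?e k)"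
      using eta_merged_singleton_le[OF assms(1), of "{i,j}"] assms(2,3)
      by (intro sum_mono) simp
  qed
  also have "\<dots> = (\<Sum>k\<in>P. ?e k)"
  proof -
    have "(\<Sum>k\<in>P - {i}. ?e k) = ?e j + (\<Sum>k\<in>P - {i} - {j}. ?e k)"
      using assms by (intro sum.remove) auto
    moreover have "P - {i} - {j} = ?R" by blast
    ultimately show ?thesis using sum.remove[OF assms(1,2), of ?e] by simp
  qed
  finally show ?thesis .
qed

text \<open>If w j \<ge> w i, adding j is injective on the coalitions in which i is critical:
  two of them differing only in j would let j replace i in a losing coalition.\<close>

lemma inj_on_insert_critical:
  fixes w :: "'p \<Rightarrow> real"
  assumes "finite P" "i \<noteq> j" "w j \<ge> w i"
  shows "inj_on (insert j) {S. S \<subseteq> P \<and> critical w q i S}"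
proof -
  have no_swap: False
    if S1: "S1 \<subseteq> P" "critical w q i S1" and S2: "S2 \<subseteq> P" "critical w q i S2"
      and "j \<notin> S2" and eq: "S1 = insert j S2" for S1 S2
  proof -
    have f2: "finite S2" using S2(1) assms(1) finite_subset by blast
    have "S1 - {i} = insert j (S2 - {i})" using eq assms(2) by blast
    hence "sum w (S1 - {i}) = w j + sum w (S2 - {i})" using f2 \<open>j \<notin> S2\<close> by simp
    moreover have "sum w S2 = w i + sum w (S2 - {i})"
      using sum.remove[OF f2 critical_mem[OF S2(2)]] .
    moreover have "sum w (S1 - {i}) < q" "sum w S2 \<ge> q"
      using S1(2) S2(2) unfolding critical_def winning_def by auto
    ultimately show False using assms(3) by linarith
  qed
  show ?thesis
  proof (rule inj_onI)
    fix S1 S2 assume S: "S1 \<in> {S. S \<subseteq> P \<and> critical w q i S}" "S2 \<in> {S. S \<subseteq> P \<and> critical w q i S}"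
      and eq: "insert j S1 = insert j S2"
    consider "j \<in> S1 \<longleftrightarrow> j \<in> S2" | "j \<in> S1" "j \<notin> S2" | "j \<notin> S1" "j \<in> S2" by blast
    then show "S1 = S2"
    proof cases
      case 1
      show ?thesis
      proof (rule set_eqI)
        fix x
        from eq have "x \<in> insert j S1 \<longleftrightarrow> x \<in> insert j S2" by simp
        then show "x \<in> S1 \<longleftrightarrow> x \<in> S2" using 1 by (cases "x = j") auto
      qed
    next
      case 2
      then have "S1 = insert j S2" using eq by (metis insert_absorb)
      then show ?thesis using no_swap[of S1 S2] S 2 by simp
    next
      case 3
      then have "S2 = insert j S1" using eq by (metis insert_absorb)
      then show ?thesis using no_swap[of S2 S1] S 3 by simp
    qed
  qed
qed

lemma insert_critical_in_merged:
  assumes "finite P" "j \<in> P" "\<forall>k\<in>P. w k \<ge> (0::real)"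
    and S: "S \<subseteq> P" "critical w q i S"
  shows "insert j S \<in> Union ` {S. S \<subseteq> merged_players P {i,j} \<and> critical (merged_weight w) q {i,j} S}"
proof -
  let ?M = "merged_players P {i,j}"
  define U where "U = insert j S"
  define S' where "S' = {X \<in> ?M. X \<subseteq> U}"
  have TM: "{i,j} \<in> ?M" by (auto simp: merged_players_def)
  have fS: "finite S" using S(1) assms(1) finite_subset by blast
  have S'M: "S' \<subseteq> ?M" unfolding S'_def by blast
  have US': "\<Union>S' = U"
    unfolding S'_def
    by (rule Union_blocks) (use S(1) assms(2) critical_mem[OF S(2)] in \<open>auto simp: U_def\<close>)
  have "sum w S \<le> sum w U"
  proof (cases "j \<in> S")
    case False
    then have "sum w U = w j + sum w S" using fS unfolding U_def by simp
    then show ?thesis using assms(2,3) by auto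
  qed (simp add: U_def insert_absorb)
  then have win: "winning w q U" using S(2) unfolding critical_def winning_def by linarith
  have "sum w (U - {i,j}) \<le> sum w (S - {i})"
  proof (rule sum_mono2)
    show "finite (S - {i})" using fS by simp
    show "U - {i,j} \<subseteq> S - {i}" unfolding U_def by blast
    show "\<And>k. k \<in> S - {i} - (U - {i,j}) \<Longrightarrow> 0 \<le> w k" using S(1) assms(3) by blast
  qed
  then have lose: "\<not> winning w q (U - {i,j})"
    using S(2) unfolding critical_def winning_def by linarith
  have "critical (merged_weight w) q {i,j} S'"
    using critical_merged_iff[OF _ S'M TM] US' win lose by simp
  then show ?thesis using S'M US' unfolding U_def by blast
qed

lemma eta_le_eta_merged_pair:
  assumes "finite P" "j \<in> P" "i \<noteq> j" "\<forall>k\<in>P. w k \<ge> 0" "w j \<ge> w i"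
  shows "eta P w q i \<le> eta (merged_players P {i,j}) (merged_weight w) q {i,j}"
proof -
  let ?M = "merged_players P {i,j}"
  have "finite {S. S \<subseteq> ?M \<and> critical (merged_weight w) q {i,j} S}"
    using finite_merged_players[OF assms(1)] by simp
  then have "card {S. S \<subseteq> P \<and> critical w q i S}
        \<le> card (Union ` {S. S \<subseteq> ?M \<and> critical (merged_weight w) q {i,j} S})"
    using inj_on_insert_critical[OF assms(1,3,5)] insert_critical_in_merged[OF assms(1,2,4)]
    by (intro card_inj_on_le[where f = "insert j"]) auto
  also have "card (Union ` {S. S \<subseteq> ?M \<and> critical (merged_weight w) q {i,j} S})
             = eta ?M (merged_weight w) q {i,j}"
    by (rule eta_merged_card_Union[symmetric]) simp
  finally show ?thesis unfolding eta_def[of P] .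
qed

lemma ratio_mono:
  fixes a a' A B :: real
  assumes "0 \<le> a" "a \<le> a'" "a' \<le> A" "A \<le> B"
  shows "a / B \<le> a' / A"
proof (cases "A = 0")
  case True
  then have "a = 0" using assms by linarith
  then show ?thesis using True by simp
next
  case False
  then have "A > 0" using assms by linarith
  then have "a / B \<le> a / A" using assms by (intro divide_left_mono) auto
  also have "\<dots> \<le> a' / A" using \<open>A > 0\<close> assms by (intro divide_right_mono) auto
  finally show ?thesis .
qed

theorem mainTheorem13:
  fixes n :: nat and w :: "nat \<Rightarrow> real" and q :: real and i j :: nat
  assumes "\<forall>k\<in>{1..n}. w k \<ge> 0"
    and "0 < q" and "q \<le> (\<Sum>k\<in>{1..n}. w k)"
    and "i \<in> {1..n}" and "j \<in> {1..n}" and "i \<noteq> j"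
    and "w j \<ge> w i"
  shows "banzhaf (merged_players {1..n} {i, j}) (merged_weight w) q {i, j}
           \<ge> banzhaf {1..n} w q i"
proof -
  let ?P = "{1..n}" and ?M = "merged_players {1..n} {i,j}"
  have fin: "finite ?P" by simp
  have i_le_T: "real (eta ?P w q i) \<le> real (eta ?M (merged_weight w) q {i,j})"
    using eta_le_eta_merged_pair[OF fin assms(5,6,1,7)] by simp
  have T_le_total: "real (eta ?M (merged_weight w) q {i,j})
                    \<le> (\<Sum>X\<in>?M. real (eta ?M (merged_weight w) q X))"
    by (rule member_le_sum) (auto simp: merged_players_def finite_merged_players[OF fin])
  show ?thesis
    unfolding banzhaf_def
    by (rule ratio_mono[OF of_nat_0_le_iff i_le_T T_le_total sum_eta_merged_le[OF fin assms(4-6)]])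
qed

end
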